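(* Let $V$ be a $5$-dimensional complex vector space and $H_1,H_2\subset\Lambda^2V$ hyperplanes such that every nonzero linear combination of their equations, viewed as a skew-symmetric form on $V$, has rank $4$. Then for every hyperplane $V_4\subset V$ the space $M(V_4)=\Lambda^2V_4\cap H_1\cap H_2$ has dimension $4$.
   Context: The hypothesis on the ranks is equivalent to smoothness of $G(2,V)\cap P(H_1\cap H_2)$ in the Plücker embedding. *)

theory Defs
  imports "HOL-Analysis.Analysis"
begin

text \<open>V = complex^5. Bivectors (elements of Lambda^2 V) are represented as
  skew-symmetric 5x5 arrays, stored as vectors indexed by pairs, so that the
  library's generic linear algebra (vec.span, vec.dim over the field complex) applies.\<close>

type_synonym bivec = "complex ^ (5 \<times> 5)"

definition wedge :: "complex^5 \<Rightarrow> complex^5 \<Rightarrow> bivec" where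
  "wedge v w = (\<chi> p. v$(fst p) * w$(snd p) - w$(fst p) * v$(snd p))"

definition Lambda2 :: "(complex^5) set \<Rightarrow> bivec set" where
  "Lambda2 U = vec.span {wedge v w | v w. v \<in> U \<and> w \<in> U}"

text \<open>A skew-symmetric bilinear form on V, given by a skew-symmetric matrix A
  (omega(v,w) = v^T A w), viewed as a linear functional on Lambda^2 V:
  pairing A (v wedge w) = omega(v,w).\<close>
definition skew :: "complex^5^5 \<Rightarrow> bool" where
  "skew A \<longleftrightarrow> transpose A = - A"

definition pairing :: "complex^5^5 \<Rightarrow> bivec \<Rightarrow> complex" where
  "pairing A X = (\<Sum>i\<in>UNIV. \<Sum>j\<in>UNIV. A$i$j * X$(i,j)) / 2"

definition hyperplane_of :: "complex^5^5 \<Rightarrow> bivec set" where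
  "hyperplane_of A = {X \<in> Lambda2 UNIV. pairing A X = 0}"

definition lincomb :: "complex \<Rightarrow> complex^5^5 \<Rightarrow> complex \<Rightarrow> complex^5^5 \<Rightarrow> complex^5^5" where
  "lincomb a A b B = (\<chi> i j. a * A$i$j + b * B$i$j)"

end

theory Submission
  imports Defs
begin

text \<open>Since dim V4 = 4, the space \<open>\<Lambda>\<^sup>2V4\<close> has dimension 6, so it suffices that the two
  equations stay linearly independent on \<open>\<Lambda>\<^sup>2V4\<close>. A nonzero combination vanishing there
  would make the hyperplane V4 of V isotropic for a skew form of rank 4. But if a hyperplane
  V4 = ker \<lambda> is isotropic for a bilinear form \<omega>, then \<omega>(v, -) is a multiple of \<lambda> for v in V4, so
  all rows of \<omega> lie in a plane and \<omega> has rank at most 2.\<close>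

lemma subspace_inter_kernel:
  fixes f :: "'a::field^'n \<Rightarrow> 'a"
  assumes "vec.subspace L" "Vector_Spaces.linear (*s) (*) f"
  shows "vec.subspace (L \<inter> {x. f x = 0})"
proof -
  interpret f: Vector_Spaces.linear "(*s)" "(*)" f by fact
  show ?thesis
    using assms(1) unfolding vec.subspace_def by (auto simp: f.add f.scale)
qed

lemma dim_inter_kernel_functional:
  fixes L :: "('a::field^'n) set" and f :: "'a^'n \<Rightarrow> 'a"
  assumes L: "vec.subspace L" and f: "Vector_Spaces.linear (*s) (*) f"
    and x0: "x0 \<in> L" "f x0 \<noteq> 0"
  shows "vec.dim (L \<inter> {x. f x = 0}) + 1 = vec.dim L"
proof -
  interpret f: Vector_Spaces.linear "(*s)" "(*)" f by fact
  let ?K = "L \<inter> {x. f x = 0}"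
  obtain B where B: "B \<subseteq> ?K" "vec.independent B" "?K \<subseteq> vec.span B" "card B = vec.dim ?K"
    using vec.basis_exists by blast
  have x0B: "x0 \<notin> vec.span B"
    using vec.span_minimal[OF B(1) subspace_inter_kernel[OF L f]] x0 by auto
  have span: "L \<subseteq> vec.span (insert x0 B)"
  proof
    fix x assume x: "x \<in> L"
    let ?c = "f x / f x0"
    have "x - ?c *s x0 \<in> ?K"
      using x x0 L by (simp add: vec.subspace_diff vec.subspace_scale f.diff f.scale)
    then show "x \<in> vec.span (insert x0 B)"
      using B(3) unfolding vec.span_insert by blast
  qed
  have "insert x0 B \<subseteq> L" using B(1) x0 by auto
  then have "vec.dim L = card (insert x0 B)"
    using span vec.independent_insertI[OF x0B B(2)] by (rule vec.dim_unique) simp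
  moreover have "card (insert x0 B) = Suc (card B)"
    using x0B vec.span_base vec.independent_bound_general[OF B(2)] by (metis card_insert_disjoint)
  ultimately show ?thesis using B(4) by simp
qed

lemma dim_inter_kernel_two_functionals:
  fixes L :: "('a::field^'n) set" and f g :: "'a^'n \<Rightarrow> 'a"
  assumes L: "vec.subspace L"
    and f: "Vector_Spaces.linear (*s) (*) f" and g: "Vector_Spaces.linear (*s) (*) g"
    and independent: "\<And>a b. (a, b) \<noteq> (0, 0) \<Longrightarrow> \<exists>x\<in>L. a * f x + b * g x \<noteq> 0"
  shows "vec.dim (L \<inter> {x. f x = 0} \<inter> {x. g x = 0}) + 2 = vec.dim L"
proof -
  interpret f: Vector_Spaces.linear "(*s)" "(*)" f by fact
  interpret g: Vector_Spaces.linear "(*s)" "(*)" g by fact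
  obtain x0 where x0: "x0 \<in> L" "f x0 \<noteq> 0"
    using independent[of 1 0] by auto
  then obtain y where y: "y \<in> L" "g x0 * f y - f x0 * g y \<noteq> 0"
    using independent[of "g x0" "- f x0"] by auto
  define z where "z = f x0 *s y - f y *s x0"
  have "z \<in> L \<inter> {x. f x = 0}"
    using L x0(1) y(1) by (simp add: z_def vec.subspace_diff vec.subspace_scale f.diff f.scale mult.commute)
  moreover have "g z \<noteq> 0"
    using y(2) by (simp add: z_def g.diff g.scale algebra_simps)
  ultimately have "vec.dim (L \<inter> {x. f x = 0} \<inter> {x. g x = 0}) + 1 = vec.dim (L \<inter> {x. f x = 0})"
    using dim_inter_kernel_functional[OF subspace_inter_kernel[OF L f] g] by blast
  moreover have "vec.dim (L \<inter> {x. f x = 0}) + 1 = vec.dim L"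
    using dim_inter_kernel_functional[OF L f x0] .
  ultimately show ?thesis by simp
qed

definition bilinear_form :: "'a::comm_semiring_1^'n^'m \<Rightarrow> 'a^'m \<Rightarrow> 'a^'n \<Rightarrow> 'a" where
  "bilinear_form M v w = (\<Sum>i\<in>UNIV. \<Sum>j\<in>UNIV. v$i * M$i$j * w$j)"

lemma bilinear_form_vector_matrix_mult:
  "bilinear_form M v w = (\<Sum>j\<in>UNIV. (v v* M)$j * w$j)"
  unfolding bilinear_form_def vector_matrix_mult_def
  by (subst sum.swap) (simp add: sum_distrib_right)

lemma bilinear_form_axis: "bilinear_form M v (axis j 1) = (v v* M)$j"
  unfolding bilinear_form_vector_matrix_mult axis_def by (simp add: if_distrib cong: if_cong)

lemma bilinear_form_add_right:
  "bilinear_form M v (x + y) = bilinear_form M v x + bilinear_form M v y"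
  unfolding bilinear_form_vector_matrix_mult by (simp add: distrib_left sum.distrib)

lemma bilinear_form_scale_right:
  "bilinear_form M v (c *s x) = c * bilinear_form M v x"
  unfolding bilinear_form_vector_matrix_mult by (simp add: sum_distrib_left mult_ac)

lemma axis_vector_matrix_mult: "axis i 1 v* M = M$i"
  by (simp add: vec_eq_iff vector_matrix_mult_def axis_def if_distrib[where f="\<lambda>a. a * _"] cong: if_cong)

lemma hyperplane_decomposition:
  fixes V :: "('a::field^'n) set"
  assumes V: "vec.subspace V" "vec.dim V + 1 = CARD('n)" and e: "e \<notin> V"
  shows "\<exists>t. x - t *s e \<in> V"
proof -
  have "vec.dim (insert e V) = CARD('n)"
    using V e by (simp add: vec.dim_insert vec.span_eq_iff[THEN iffD2])
  then have "vec.span (insert e V) = UNIV"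
    using vec.dim_eq_full[of "insert e V"] by (simp add: vec.dimension_def card_cart_basis)
  then have "x \<in> {x. \<exists>t. x - t *s e \<in> vec.span V}"
    unfolding vec.span_insert by simp
  then show ?thesis
    using vec.span_eq_iff[THEN iffD2, OF V(1)] by simp
qed

lemma rank_le_2_if_isotropic_hyperplane:
  fixes M :: "'a::field^'n^'n" and V :: "('a^'n) set"
  assumes V: "vec.subspace V" "vec.dim V + 1 = CARD('n)"
    and isotropic: "\<And>v w. v \<in> V \<Longrightarrow> w \<in> V \<Longrightarrow> bilinear_form M v w = 0"
  shows "rank M \<le> 2"
proof -
  have "V \<noteq> UNIV"
    using V(2) vec_dim_card[where 'a='a and 'n='n] by auto
  then obtain e where e: "e \<notin> V" by blast
  have "\<forall>j. \<exists>c. axis j 1 - c *s e \<in> V"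
    using hyperplane_decomposition[OF V e] by blast
  then obtain t where t: "\<And>j. axis j 1 - t j *s e \<in> V" by metis
  define \<tau> where "\<tau> = (\<chi> j. t j)"
  \<comment> \<open>\<tau> spans the annihilator of V, and \<open>v v* M\<close> annihilates V by isotropy.\<close>
  have image_V: "v v* M = bilinear_form M v e *s \<tau>" if "v \<in> V" for v
  proof -
    have "(v v* M)$j = t j * bilinear_form M v e" for j
    proof -
      have "(v v* M)$j = bilinear_form M v ((axis j 1 - t j *s e) + t j *s e)"
        by (simp add: bilinear_form_axis)
      also have "\<dots> = t j * bilinear_form M v e"
        using isotropic[OF that t[of j]] by (simp only: bilinear_form_add_right bilinear_form_scale_right) simp
      finally show ?thesis .
    qed
    then show ?thesis by (simp add: vec_eq_iff \<tau>_def mult.commute)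
  qed
  have "rows M \<subseteq> vec.span {\<tau>, e v* M}"
  proof
    fix r assume "r \<in> rows M"
    then obtain i where "r = M$i" by (auto simp: rows_def row_def)
    also have "M$i = axis i 1 v* M"
      by (simp add: axis_vector_matrix_mult)
    also have "\<dots> = (axis i 1 - t i *s e) v* M + t i *s (e v* M)"
      by (simp add: vector_matrix_mult_diff_distrib scalar_vector_matrix_assoc)
    also have "\<dots> = bilinear_form M (axis i 1 - t i *s e) e *s \<tau> + t i *s (e v* M)"
      using image_V[OF t[of i]] by simp
    finally show "r \<in> vec.span {\<tau>, e v* M}"
      by (simp add: vec.span_add vec.span_scale vec.span_base)
  qed
  then have "rank M \<le> card {\<tau>, e v* M}"
    unfolding row_rank_def_gen by (rule vec.dim_le_card) simp
  also have "\<dots> \<le> 2" by (simp add: card_insert_if)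
  finally show ?thesis .
qed

lemma independent_if_biorthogonal:
  fixes w Q :: "'i \<Rightarrow> 'a::field^'m"
  assumes "finite I"
    and biorth: "\<And>i j. i \<in> I \<Longrightarrow> j \<in> I \<Longrightarrow> (\<Sum>p\<in>UNIV. Q i $ p * w j $ p) = of_bool (i = j)"
  shows "vec.independent (w ` I)" and "inj_on w I"
proof -
  show inj: "inj_on w I"
  proof (rule inj_onI)
    fix i j assume "i \<in> I" "j \<in> I" "w i = w j"
    then show "i = j" using biorth[of i i] biorth[of i j] by auto
  qed
  show "vec.independent (w ` I)"
  proof (rule vec.independent_if_scalars_zero)
    show "finite (w ` I)" using assms(1) by simp
    fix c x assume sum0: "(\<Sum>x\<in>w ` I. c x *s x) = 0" and "x \<in> w ` I"
    then obtain i where i: "i \<in> I" "x = w i" by blast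
    have "0 = (\<Sum>p\<in>UNIV. Q i $ p * (\<Sum>j\<in>I. c (w j) *s w j) $ p)"
      using sum0 by (simp add: sum.reindex[OF inj])
    also have "\<dots> = (\<Sum>j\<in>I. c (w j) * (\<Sum>p\<in>UNIV. Q i $ p * w j $ p))"
      by (simp add: sum_component sum_distrib_left mult_ac sum.swap[where A=UNIV])
    also have "\<dots> = (\<Sum>j\<in>I. c (w j) * of_bool (i = j))"
      using i by (simp add: biorth)
    also have "\<dots> = c x"
      using assms(1) i by (simp add: of_bool_def if_distrib[where f="\<lambda>a. _ * a"] cong: if_cong)
    finally show "c x = 0" by simp
  qed
qed

lemma biorthogonal_functionals:
  fixes B :: "('a::field^'n) set"
  assumes "vec.independent B"
  obtains \<phi> where "\<And>b. Vector_Spaces.linear (*s) (*) (\<phi> b)"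
    and "\<And>b b'. b \<in> B \<Longrightarrow> b' \<in> B \<Longrightarrow> \<phi> b b' = of_bool (b = b')"
proof
  let ?C = "vec.extend_basis B"
  have C: "vec.independent ?C" "vec.span ?C = UNIV" "B \<subseteq> ?C"
    using vec.independent_extend_basis[OF assms] vec.span_extend_basis[OF assms]
      vec.extend_basis_superset[OF assms] by blast+
  show "Vector_Spaces.linear (*s) (*) (\<lambda>x. vec.representation ?C x b)" for b
    using vec.linear_representation[OF C(1,2)] .
  show "vec.representation ?C b' b = of_bool (b = b')" if "b \<in> B" "b' \<in> B" for b b'
    using vec.representation_basis[OF C(1)] that C(3) by auto
qed

lemma linear_functional_expansion:
  fixes \<phi> :: "'a::field^'n \<Rightarrow> 'a"
  assumes "Vector_Spaces.linear (*s) (*) \<phi>"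
  shows "\<phi> x = (\<Sum>i\<in>UNIV. x$i * \<phi> (axis i 1))"
proof -
  interpret \<phi>: Vector_Spaces.linear "(*s)" "(*)" \<phi> by fact
  have "\<phi> x = \<phi> (\<Sum>i\<in>UNIV. x$i *s axis i 1)"
    by (simp only: basis_expansion)
  also have "\<dots> = (\<Sum>i\<in>UNIV. x$i * \<phi> (axis i 1))"
    by (simp add: \<phi>.sum \<phi>.scale)
  finally show ?thesis .
qed

lemma wedge_add_left: "wedge (x + y) w = wedge x w + wedge y w"
  unfolding wedge_def by (simp add: vec_eq_iff algebra_simps)

lemma wedge_add_right: "wedge v (x + y) = wedge v x + wedge v y"
  unfolding wedge_def by (simp add: vec_eq_iff algebra_simps)

lemma wedge_scale_left: "wedge (c *s x) w = c *s wedge x w"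
  unfolding wedge_def by (simp add: vec_eq_iff algebra_simps)

lemma wedge_scale_right: "wedge v (c *s x) = c *s wedge v x"
  unfolding wedge_def by (simp add: vec_eq_iff algebra_simps)

lemma wedge_0_left [simp]: "wedge 0 w = 0"
  unfolding wedge_def by (simp add: vec_eq_iff)

lemma wedge_0_right [simp]: "wedge v 0 = 0"
  unfolding wedge_def by (simp add: vec_eq_iff)

lemma wedge_self [simp]: "wedge v v = 0"
  unfolding wedge_def by (simp add: vec_eq_iff mult.commute)

lemma wedge_commute: "wedge w v = - wedge v w"
  unfolding wedge_def by (simp add: vec_eq_iff)

lemma wedge_in_Lambda2: "v \<in> U \<Longrightarrow> w \<in> U \<Longrightarrow> wedge v w \<in> Lambda2 U"
  unfolding Lambda2_def by (intro vec.span_base) blast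

lemma subspace_Lambda2: "vec.subspace (Lambda2 U)"
  unfolding Lambda2_def by simp

lemma Lambda2_mono: "U \<subseteq> U' \<Longrightarrow> Lambda2 U \<subseteq> Lambda2 U'"
  unfolding Lambda2_def by (intro vec.span_mono) blast

lemma Lambda2_subset_span_wedge:
  assumes "U \<subseteq> vec.span B"
  shows "Lambda2 U \<subseteq> vec.span {wedge x y | x y. x \<in> B \<and> y \<in> B}"
proof -
  let ?S = "vec.span {wedge x y | x y. x \<in> B \<and> y \<in> B}"
  have left: "wedge x y \<in> ?S" if "x \<in> vec.span B" "y \<in> B" for x y
  proof -
    have "vec.subspace {x. wedge x y \<in> ?S}"
      by (simp add: vec.subspace_def wedge_add_left wedge_scale_left vec.span_zero vec.span_add vec.span_scale)
    moreover have "B \<subseteq> {x. wedge x y \<in> ?S}"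
      using that(2) by (auto intro: vec.span_base)
    ultimately have "vec.span B \<subseteq> {x. wedge x y \<in> ?S}"
      by (rule vec.span_minimal[rotated])
    then show ?thesis using that(1) by blast
  qed
  have "wedge x y \<in> ?S" if "x \<in> vec.span B" "y \<in> vec.span B" for x y
  proof -
    have "vec.subspace {y. wedge x y \<in> ?S}"
      by (simp add: vec.subspace_def wedge_add_right wedge_scale_right vec.span_zero vec.span_add vec.span_scale)
    moreover have "B \<subseteq> {y. wedge x y \<in> ?S}"
      using left[OF that(1)] by blast
    ultimately have "vec.span B \<subseteq> {y. wedge x y \<in> ?S}"
      by (rule vec.span_minimal[rotated])
    then show ?thesis using that(2) by blast
  qed
  then have "{wedge v w | v w. v \<in> U \<and> w \<in> U} \<subseteq> ?S"
    using assms by blast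
  then show ?thesis
    unfolding Lambda2_def by (rule vec.span_minimal) simp
qed

definition wedge_dual :: "(complex^5 \<Rightarrow> complex) \<Rightarrow> (complex^5 \<Rightarrow> complex) \<Rightarrow> bivec" where
  "wedge_dual \<phi> \<psi> = (\<chi> q. \<phi> (axis (fst q) 1) * \<psi> (axis (snd q) 1))"

lemma wedge_dual_wedge:
  assumes "Vector_Spaces.linear (*s) (*) \<phi>" "Vector_Spaces.linear (*s) (*) \<psi>"
  shows "(\<Sum>q\<in>UNIV. wedge_dual \<phi> \<psi> $ q * wedge v w $ q) = \<phi> v * \<psi> w - \<phi> w * \<psi> v"
proof -
  let ?a = "\<lambda>i. \<phi> (axis i 1)" and ?c = "\<lambda>j. \<psi> (axis j 1)"
  have "(\<Sum>q\<in>UNIV. wedge_dual \<phi> \<psi> $ q * wedge v w $ q)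
      = (\<Sum>i\<in>UNIV. \<Sum>j\<in>UNIV. ?a i * ?c j * (v$i * w$j - w$i * v$j))"
    unfolding wedge_dual_def wedge_def UNIV_Times_UNIV[symmetric] sum.cartesian_product
    by (simp add: case_prod_beta)
  also have "\<dots> = (\<Sum>i\<in>UNIV. \<Sum>j\<in>UNIV. (v$i * ?a i) * (w$j * ?c j) - (w$i * ?a i) * (v$j * ?c j))"
    by (simp add: algebra_simps)
  also have "\<dots> = (\<Sum>i\<in>UNIV. v$i * ?a i) * (\<Sum>j\<in>UNIV. w$j * ?c j)
      - (\<Sum>i\<in>UNIV. w$i * ?a i) * (\<Sum>j\<in>UNIV. v$j * ?c j)"
    by (simp add: sum_product sum_subtractf)
  also have "\<dots> = \<phi> v * \<psi> w - \<phi> w * \<psi> v"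
    by (simp only: linear_functional_expansion[OF assms(1), of v] linear_functional_expansion[OF assms(1), of w]
        linear_functional_expansion[OF assms(2), of v] linear_functional_expansion[OF assms(2), of w])
  finally show ?thesis .
qed

lemma card_ordered_pairs: "card {(i, j). i < j \<and> j < k} = k choose 2"
proof (induction k)
  case 0
  then show ?case by simp
next
  case (Suc k)
  have "finite {(i, j). i < j \<and> j < k}"
    by (rule finite_subset[of _ "{..<k} \<times> {..<k}"]) auto
  then have "card ({(i, j). i < j \<and> j < k} \<union> (\<lambda>i. (i, k)) ` {..<k}) = (k choose 2) + k"
    using Suc.IH by (subst card_Un_disjoint) (auto simp: card_image inj_on_def)
  moreover have "{(i, j). i < j \<and> j < Suc k} = {(i, j). i < j \<and> j < k} \<union> (\<lambda>i. (i, k)) ` {..<k}"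
    by auto
  ultimately show ?case by (simp add: numeral_2_eq_2)
qed

lemma dim_Lambda2:
  assumes V: "vec.subspace V" and dim: "vec.dim V = k"
  shows "vec.dim (Lambda2 V) = k choose 2"
proof -
  obtain B where B: "B \<subseteq> V" "vec.independent B" "V \<subseteq> vec.span B" "card B = k"
    using vec.basis_exists dim by metis
  obtain b where b: "bij_betw b {..<k} B"
    using ex_bij_betw_nat_finite[OF vec.finiteI_independent[OF B(2)]] B(4)
    by (metis atLeast0LessThan)
  have B_eq: "B = b ` {..<k}"
    using b by (simp add: bij_betw_def)
  have b_inj: "b i = b j \<longleftrightarrow> i = j" if "i < k" "j < k" for i j
    using b that unfolding bij_betw_def inj_on_def by auto
  have b_in: "b i \<in> B" if "i < k" for i
    using that by (simp add: B_eq)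
  obtain \<phi> where \<phi>: "\<And>x. Vector_Spaces.linear (*s) (*) (\<phi> x)"
    "\<And>x y. x \<in> B \<Longrightarrow> y \<in> B \<Longrightarrow> \<phi> x y = of_bool (x = y)"
    using biorthogonal_functionals[OF B(2)] by blast
  \<comment> \<open>The wedges \<open>b i \<and> b j\<close> with \<open>i < j\<close> form a basis, detected by the duals \<open>\<phi> (b i) \<and> \<phi> (b j)\<close>.\<close>
  define I where "I = {(i, j). i < j \<and> j < k}"
  define W where "W p = wedge (b (fst p)) (b (snd p))" for p
  have I: "finite I" "card I = k choose 2"
    unfolding I_def using card_ordered_pairs
    by (auto intro: finite_subset[of _ "{..<k} \<times> {..<k}"])
  have "(\<Sum>q\<in>UNIV. wedge_dual (\<phi> (b (fst p))) (\<phi> (b (snd p))) $ q * W p' $ q) = of_bool (p = p')"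
    if pI: "p \<in> I" "p' \<in> I" for p p'
  proof -
    obtain i j i' j' where "p = (i, j)" "p' = (i', j')" "i < j" "j < k" "i' < j'" "j' < k"
      using pI by (auto simp: I_def)
    then show ?thesis
      by (simp add: W_def wedge_dual_wedge \<phi> b_in b_inj)
  qed
  note W = independent_if_biorthogonal[OF I(1) this]
  have "W p \<in> Lambda2 V" if "p \<in> I" for p
    unfolding W_def using that B(1) b_in by (intro wedge_in_Lambda2) (auto simp: I_def)
  then have "W ` I \<subseteq> Lambda2 V" by blast
  moreover have "Lambda2 V \<subseteq> vec.span (W ` I)"
  proof -
    have "wedge x y \<in> vec.span (W ` I)" if xy: "x \<in> B" "y \<in> B" for x y
    proof -
      obtain i j where ij: "i < k" "j < k" "x = b i" "y = b j"
        using xy unfolding B_eq by blast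
      consider "i < j" | "i = j" | "j < i" by arith
      then show ?thesis
      proof cases
        case 1
        then show ?thesis
          using ij unfolding W_def I_def by (intro vec.span_base) (auto intro: image_eqI[of _ _ "(i, j)"])
      next
        case 2
        then show ?thesis using ij by (simp add: vec.span_zero)
      next
        case 3
        then have "wedge y x \<in> vec.span (W ` I)"
          using ij unfolding W_def I_def by (intro vec.span_base) (auto intro: image_eqI[of _ _ "(j, i)"])
        then show ?thesis by (metis wedge_commute vec.span_neg minus_minus)
      qed
    qed
    then have "vec.span {wedge x y | x y. x \<in> B \<and> y \<in> B} \<subseteq> vec.span (W ` I)"
      by (intro vec.span_minimal) auto
    then show ?thesis
      using Lambda2_subset_span_wedge[OF B(3)] by blast
  qed
  moreover have "card (W ` I) = k choose 2"
    using card_image[OF W(2)] I(2) by simp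
  ultimately show ?thesis
    using W(1) by (intro vec.dim_unique) auto
qed

lemma linear_pairing: "Vector_Spaces.linear (*s) (*) (pairing A)"
  by unfold_locales (simp_all add: pairing_def algebra_simps sum.distrib sum_distrib_left add_divide_distrib)

lemma pairing_lincomb: "pairing (lincomb a A b B) X = a * pairing A X + b * pairing B X"
  unfolding pairing_def lincomb_def
  by (simp add: sum_distrib_left sum.distrib algebra_simps add_divide_distrib)

lemma skew_entry:
  assumes "skew A"
  shows "A$j$i = - A$i$j"
proof -
  have "transpose A $ i $ j = (- A) $ i $ j"
    using assms unfolding skew_def by simp
  then show ?thesis by (simp add: transpose_def)
qed

lemma skew_lincomb:
  assumes "skew A" "skew B"
  shows "skew (lincomb a A b B)"
proof -
  have "transpose (lincomb a A b B) = lincomb a (transpose A) b (transpose B)"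
    by (simp add: vec_eq_iff transpose_def lincomb_def)
  also have "\<dots> = - lincomb a A b B"
    using assms unfolding skew_def by (simp add: vec_eq_iff lincomb_def)
  finally show ?thesis unfolding skew_def .
qed

lemma pairing_wedge:
  assumes "skew A"
  shows "pairing A (wedge v w) = bilinear_form A v w"
proof -
  have "(\<Sum>i\<in>UNIV. \<Sum>j\<in>UNIV. A$i$j * (w$i * v$j)) = (\<Sum>i\<in>UNIV. \<Sum>j\<in>UNIV. A$j$i * (w$j * v$i))"
    by (rule sum.swap)
  also have "\<dots> = - bilinear_form A v w"
  proof -
    have "A$j$i * (w$j * v$i) = - (v$i * A$i$j * w$j)" for i j
      unfolding skew_entry[OF assms, of j i] by simp
    then show ?thesis
      unfolding bilinear_form_def by (simp add: sum_negf)
  qed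
  finally show ?thesis
    unfolding pairing_def wedge_def bilinear_form_def
    by (simp add: right_diff_distrib sum_subtractf mult_ac)
qed

lemma ex_pairing_nonzero_on_Lambda2:
  assumes "skew M" "rank M > 2" "vec.subspace V" "vec.dim V = 4"
  shows "\<exists>X\<in>Lambda2 V. pairing M X \<noteq> 0"
proof -
  obtain v w where "v \<in> V" "w \<in> V" "bilinear_form M v w \<noteq> 0"
    using rank_le_2_if_isotropic_hyperplane[of V M] assms(2-4) by force
  then show ?thesis
    using wedge_in_Lambda2 pairing_wedge[OF assms(1)] by metis
qed

theorem lemma3p1:
  fixes A1 A2 :: "complex^5^5"
  assumes "skew A1" and "skew A2"
    and "\<forall>a b. (a, b) \<noteq> (0, 0) \<longrightarrow> rank (lincomb a A1 b A2) = 4"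
  shows "\<forall>V4 :: (complex^5) set. vec.subspace V4 \<and> vec.dim V4 = 4 \<longrightarrow>
           vec.dim (Lambda2 V4 \<inter> hyperplane_of A1 \<inter> hyperplane_of A2) = 4"
proof (intro allI impI)
  fix V4 :: "(complex^5) set"
  assume "vec.subspace V4 \<and> vec.dim V4 = 4"
  then have V4: "vec.subspace V4" "vec.dim V4 = 4" by auto
  have hyperplanes: "Lambda2 V4 \<inter> hyperplane_of A1 \<inter> hyperplane_of A2
      = Lambda2 V4 \<inter> {X. pairing A1 X = 0} \<inter> {X. pairing A2 X = 0}"
    using Lambda2_mono[of V4 UNIV] unfolding hyperplane_of_def by blast
  have "\<exists>X\<in>Lambda2 V4. a * pairing A1 X + b * pairing A2 X \<noteq> 0" if "(a, b) \<noteq> (0, 0)" for a b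
    using ex_pairing_nonzero_on_Lambda2[OF skew_lincomb[OF assms(1,2)] _ V4] assms(3) that
    by (simp add: pairing_lincomb)
  then have "vec.dim (Lambda2 V4 \<inter> {X. pairing A1 X = 0} \<inter> {X. pairing A2 X = 0}) + 2
      = vec.dim (Lambda2 V4)"
    by (intro dim_inter_kernel_two_functionals subspace_Lambda2 linear_pairing)
  moreover have "vec.dim (Lambda2 V4) = 6"
    using dim_Lambda2[OF V4] by (simp add: choose_two)
  ultimately show "vec.dim (Lambda2 V4 \<inter> hyperplane_of A1 \<inter> hyperplane_of A2) = 4"
    unfolding hyperplanes by simp
qed

end
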